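(* Fix $\varepsilon\in\{1,-1\}$, $m\in\{1,2,5,7,8,10,11,13,14,16,17,19,22,23\}$, and a nonnegative integer $n$ with $\delta_m(n)$ squarefree. Let $\ell$ be a prime of bad reduction for $E_{m,n}$. Then $E_{m,n}$ has multiplicative reduction at $\ell$, and: (i) if $\ell=2$, the reduction is split; (ii) if $\ell\mid m+24n$, the reduction is split; (iii) if $\ell\mid f_m(n)$, the reduction is split when $\ell\equiv1\pmod3$ and nonsplit when $\ell\equiv2\pmod3$.
   Context: Let $f_m(n)=62208n^2+(5184m-432\varepsilon)n+(108m^2-18\varepsilon m+1)$; $i=1$ if $m$ odd, $i=2$ if $m$ even and $m\ne8,16$, $i=4$ if $m\in\{8,16\}$; $\delta_m(n)=2^{1-i}(m+24n)f_m(n)$. Put $A=18(m+24n)-\varepsilon$, $B=4\varepsilon/9$, $D=-3$, $r=1/3+A^2$, $H(m,n)=\frac1{16}(2ABD+2A^2Dr+3r^2)$, $J(m,n)=\frac1{64}(B^2D+2ABDr+A^2Dr^2+r^3)$ (integers), and $E_{m,n}:y^2+xy=x^3+H(m,n)x+J(m,n)$. *)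

theory Defs
  imports "HOL-Computational_Algebra.Computational_Algebra" "HOL-Number_Theory.Number_Theory"
begin

section \<open>Weierstrass models y^2 + a1 xy + a3 y = x^3 + a2 x^2 + a4 x + a6\<close>

type_synonym 'a wm = "'a \<times> 'a \<times> 'a \<times> 'a \<times> 'a"

fun wm_map :: "('a \<Rightarrow> 'b) \<Rightarrow> 'a wm \<Rightarrow> 'b wm" where
  "wm_map f (a1,a2,a3,a4,a6) = (f a1, f a2, f a3, f a4, f a6)"

fun wm_b2 :: "'a::comm_ring_1 wm \<Rightarrow> 'a" where
  "wm_b2 (a1,a2,a3,a4,a6) = a1^2 + 4*a2"
fun wm_b4 :: "'a::comm_ring_1 wm \<Rightarrow> 'a" where
  "wm_b4 (a1,a2,a3,a4,a6) = 2*a4 + a1*a3"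
fun wm_b6 :: "'a::comm_ring_1 wm \<Rightarrow> 'a" where
  "wm_b6 (a1,a2,a3,a4,a6) = a3^2 + 4*a6"
fun wm_b8 :: "'a::comm_ring_1 wm \<Rightarrow> 'a" where
  "wm_b8 (a1,a2,a3,a4,a6) = a1^2*a6 + 4*a2*a6 - a1*a3*a4 + a2*a3^2 - a4^2"

definition wm_c4 :: "'a::comm_ring_1 wm \<Rightarrow> 'a" where
  "wm_c4 E = (wm_b2 E)^2 - 24 * wm_b4 E"

definition wm_disc :: "'a::comm_ring_1 wm \<Rightarrow> 'a" where
  "wm_disc E = - ((wm_b2 E)^2 * wm_b8 E) - 8 * (wm_b4 E)^3 - 27 * (wm_b6 E)^2
               + 9 * wm_b2 E * wm_b4 E * wm_b6 E"

text \<open>Isomorphism over Q (Silverman, Table 3.1): E' is obtained from E by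
  x = u^2 x' + r, y = u^3 y' + s u^2 x' + t with u,r,s,t rational, u nonzero.\<close>
fun wm_iso :: "rat wm \<Rightarrow> rat wm \<Rightarrow> bool" where
  "wm_iso (a1,a2,a3,a4,a6) (b1,b2,b3,b4,b6) =
    (\<exists>u r s t. u \<noteq> 0 \<and>
       u * b1 = a1 + 2*s \<and>
       u^2 * b2 = a2 - s*a1 + 3*r - s^2 \<and>
       u^3 * b3 = a3 + r*a1 + 2*t \<and>
       u^4 * b4 = a4 - s*a3 + 2*r*a2 - (t + r*s)*a1 + 3*r^2 - 2*s*t \<and>
       u^6 * b6 = a6 + r*a4 + r^2*a2 + r^3 - t*a3 - t^2 - r*t*a1)"

definition minimal_model_at :: "nat \<Rightarrow> rat wm \<Rightarrow> int wm \<Rightarrow> bool" where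
  "minimal_model_at l E M \<longleftrightarrow>
     wm_iso E (wm_map of_int M) \<and>
     (\<forall>M'. wm_iso E (wm_map of_int M') \<longrightarrow>
        multiplicity (int l) (wm_disc M) \<le> multiplicity (int l) (wm_disc M'))"

definition bad_reduction :: "nat \<Rightarrow> rat wm \<Rightarrow> bool" where
  "bad_reduction l E \<longleftrightarrow> (\<exists>M. minimal_model_at l E M \<and> int l dvd wm_disc M)"

definition multiplicative_reduction :: "nat \<Rightarrow> rat wm \<Rightarrow> bool" where
  "multiplicative_reduction l E \<longleftrightarrow>
     (\<exists>M. minimal_model_at l E M \<and> int l dvd wm_disc M \<and> \<not> int l dvd wm_c4 M)"

fun singular_point_mod :: "nat \<Rightarrow> int wm \<Rightarrow> int \<Rightarrow> int \<Rightarrow> bool" where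
  "singular_point_mod l (a1,a2,a3,a4,a6) x y \<longleftrightarrow>
     [y^2 + a1*x*y + a3*y - x^3 - a2*x^2 - a4*x - a6 = 0] (mod int l) \<and>
     [a1*y - 3*x^2 - 2*a2*x - a4 = 0] (mod int l) \<and>
     [2*y + a1*x + a3 = 0] (mod int l)"

text \<open>The tangent cone at the singular point (x0,y0) is Y^2 + a1 XY - (3 x0 + a2) X^2;
  the tangent lines are defined over F_l iff T^2 + a1 T - (3 x0 + a2) has a root mod l.\<close>
fun rational_tangents_mod :: "nat \<Rightarrow> int wm \<Rightarrow> int \<Rightarrow> bool" where
  "rational_tangents_mod l (a1,a2,a3,a4,a6) x0 \<longleftrightarrow>
     (\<exists>T. [T^2 + a1*T - (3*x0 + a2) = 0] (mod int l))"

definition split_multiplicative_reduction :: "nat \<Rightarrow> rat wm \<Rightarrow> bool" where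
  "split_multiplicative_reduction l E \<longleftrightarrow>
     (\<exists>M x0 y0. minimal_model_at l E M \<and> int l dvd wm_disc M \<and> \<not> int l dvd wm_c4 M \<and>
        singular_point_mod l M x0 y0 \<and> rational_tangents_mod l M x0)"

definition nonsplit_multiplicative_reduction :: "nat \<Rightarrow> rat wm \<Rightarrow> bool" where
  "nonsplit_multiplicative_reduction l E \<longleftrightarrow>
     (\<exists>M x0 y0. minimal_model_at l E M \<and> int l dvd wm_disc M \<and> \<not> int l dvd wm_c4 M \<and>
        singular_point_mod l M x0 y0 \<and> \<not> rational_tangents_mod l M x0)"

definition f_m :: "int \<Rightarrow> int \<Rightarrow> int \<Rightarrow> int" where
  "f_m \<epsilon> m n = 62208*n^2 + (5184*m - 432*\<epsilon>)*n + (108*m^2 - 18*\<epsilon>*m + 1)"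

definition i_m :: "int \<Rightarrow> nat" where
  "i_m m = (if odd m then 1 else if m \<in> {8,16} then 4 else 2)"

definition delta_m :: "int \<Rightarrow> int \<Rightarrow> int \<Rightarrow> int" where
  "delta_m \<epsilon> m n = ((m + 24*n) * f_m \<epsilon> m n) div 2^(i_m m - 1)"

definition A_mn :: "int \<Rightarrow> int \<Rightarrow> int \<Rightarrow> rat" where
  "A_mn \<epsilon> m n = of_int (18*(m + 24*n) - \<epsilon>)"
definition B_e :: "int \<Rightarrow> rat" where
  "B_e \<epsilon> = 4 * of_int \<epsilon> / 9"
definition D_c :: rat where "D_c = -3"
definition r_mn :: "int \<Rightarrow> int \<Rightarrow> int \<Rightarrow> rat" where
  "r_mn \<epsilon> m n = 1/3 + (A_mn \<epsilon> m n)^2"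

definition H_mn :: "int \<Rightarrow> int \<Rightarrow> int \<Rightarrow> rat" where
  "H_mn \<epsilon> m n = (let A = A_mn \<epsilon> m n; B = B_e \<epsilon>; D = D_c; r = r_mn \<epsilon> m n in
     (2*A*B*D + 2*A^2*D*r + 3*r^2) / 16)"
definition J_mn :: "int \<Rightarrow> int \<Rightarrow> int \<Rightarrow> rat" where
  "J_mn \<epsilon> m n = (let A = A_mn \<epsilon> m n; B = B_e \<epsilon>; D = D_c; r = r_mn \<epsilon> m n in
     (B^2*D + 2*A*B*D*r + A^2*D*r^2 + r^3) / 64)"

definition E_mn :: "int \<Rightarrow> int \<Rightarrow> int \<Rightarrow> rat wm" where
  "E_mn \<epsilon> m n = (1, 0, 0, H_mn \<epsilon> m n, J_mn \<epsilon> m n)"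

end

theory Submission
  imports Defs
begin

text \<open>
  Put k = \<epsilon>(m + 24n). Since \<epsilon>A = 18k - 1 and \<epsilon>^2 = 1, the curve E_{m,n} depends on k
  only; it is the integral model y^2 + xy = x^3 + hx + j with
  48h = 1 - a(9a^3 + 8) and 1728j = -(54a^6 + 27a^4 + 72a^3 + 24a + 15), a = 18k - 1.
  Its discriminant is -2kf with f = 108k^2 - 18k + 1 = f_m(n), and c4 = a(9a^3 + 8) is
  prime to 2, to k and to f. An integral model whose c4 is an l-adic unit is minimal at l,
  so every bad prime divides 2kf and the reduction there is multiplicative.
  The node lies at (0, h) for l = 2 and at (0, 0) for l | k, where the tangent cone
  Y^2 + XY splits; for l | f it lies at x = v/4 with v = 6k - 1, and there the tangents
  are rational iff -3 is a square mod l, i.e. iff l \<equiv> 1 (mod 3).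
\<close>

section \<open>Weierstrass models: invariants and minimality\<close>

lemma wm_disc_c4_scale:
  fixes u b1 b2 b3 b4 b6 :: "'a::comm_ring_1"
  shows "wm_disc (u*b1, u^2*b2, u^3*b3, u^4*b4, u^6*b6) = u^12 * wm_disc (b1, b2, b3, b4, b6)"
    and "wm_c4 (u*b1, u^2*b2, u^3*b3, u^4*b4, u^6*b6) = u^4 * wm_c4 (b1, b2, b3, b4, b6)"
  by (simp_all add: wm_disc_def wm_c4_def eval_nat_numeral algebra_simps)

lemma wm_disc_c4_translate:
  fixes a1 a2 a3 a4 a6 r s t :: "'a::comm_ring_1"
  defines "E' \<equiv> (a1 + 2*s, a2 - s*a1 + 3*r - s^2, a3 + r*a1 + 2*t,
                 a4 - s*a3 + 2*r*a2 - (t + r*s)*a1 + 3*r^2 - 2*s*t,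
                 a6 + r*a4 + r^2*a2 + r^3 - t*a3 - t^2 - r*t*a1)"
  shows "wm_disc E' = wm_disc (a1, a2, a3, a4, a6)" and "wm_c4 E' = wm_c4 (a1, a2, a3, a4, a6)"
  unfolding E'_def by (simp_all add: wm_disc_def wm_c4_def eval_nat_numeral algebra_simps)

lemma wm_iso_disc_c4:
  assumes "wm_iso E E'"
  obtains u where "u \<noteq> 0" "wm_disc E = u^12 * wm_disc E'" "wm_c4 E = u^4 * wm_c4 E'"
proof -
  obtain a1 a2 a3 a4 a6 b1 b2 b3 b4 b6 where
    E: "E = (a1, a2, a3, a4, a6)" and E': "E' = (b1, b2, b3, b4, b6)"
    by (cases E, cases E') auto
  from assms obtain u r s t where "u \<noteq> 0" and
    "u * b1 = a1 + 2*s" "u^2 * b2 = a2 - s*a1 + 3*r - s^2" "u^3 * b3 = a3 + r*a1 + 2*t"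
    "u^4 * b4 = a4 - s*a3 + 2*r*a2 - (t + r*s)*a1 + 3*r^2 - 2*s*t"
    "u^6 * b6 = a6 + r*a4 + r^2*a2 + r^3 - t*a3 - t^2 - r*t*a1"
    unfolding E E' by auto
  with wm_disc_c4_scale[of u b1 b2 b3 b4 b6] wm_disc_c4_translate[of a1 s a2 r a3 t a4 a6]
  show thesis by (intro that[of u]) (simp_all add: E E')
qed

lemma wm_iso_refl: "wm_iso E E"
proof (cases E)
  case (fields a1 a2 a3 a4 a6)
  show ?thesis unfolding fields wm_iso.simps
    by (rule exI[of _ 1], rule exI[of _ 0], rule exI[of _ 0], rule exI[of _ 0]) simp
qed

lemma wm_disc_map_of_int [simp]: "wm_disc (wm_map of_int M) = of_int (wm_disc M)"
  by (cases M) (simp add: wm_disc_def)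

lemma wm_c4_map_of_int [simp]: "wm_c4 (wm_map of_int M) = of_int (wm_c4 M)"
  by (cases M) (simp add: wm_c4_def)

lemma quotient_of_power_mult_eq:
  assumes ab: "quotient_of u = (a, b)" and eq: "u ^ k * of_int x = of_int y"
  shows "a ^ k * x = b ^ k * y"
proof -
  have "u = of_int a / of_int b" "b > 0"
    using quotient_of_div[OF ab] quotient_of_denom_pos[OF ab] by auto
  with eq have "(of_int (a ^ k * x) :: rat) = of_int (b ^ k * y)"
    by (simp add: field_simps power_divide)
  then show ?thesis by (simp only: of_int_eq_iff)
qed

lemma minimal_model_at_if_not_dvd_c4:
  assumes l: "prime l" and disc: "wm_disc M \<noteq> 0" and c4: "\<not> int l dvd wm_c4 M"
  shows "minimal_model_at l (wm_map of_int M) M"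
  unfolding minimal_model_at_def
proof (intro conjI allI impI wm_iso_refl)
  fix M' assume "wm_iso (wm_map of_int M) (wm_map of_int M')"
  then obtain u :: rat where "u \<noteq> 0"
    and u_disc: "u^12 * of_int (wm_disc M') = of_int (wm_disc M)"
    and u_c4: "u^4 * of_int (wm_c4 M') = of_int (wm_c4 M)"
    by (rule wm_iso_disc_c4) simp
  obtain a b where ab: "quotient_of u = (a, b)" by (cases "quotient_of u")
  have disc_eq: "a^12 * wm_disc M' = b^12 * wm_disc M"
    and c4_eq: "a^4 * wm_c4 M' = b^4 * wm_c4 M"
    using quotient_of_power_mult_eq[OF ab] u_disc u_c4 by auto
  have l_prime: "prime (int l)" using l by simp
  \<comment> \<open>since l does not divide c4(M), the scaling factor u is an l-adic unit\<close>
  have "\<not> int l dvd a"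
  proof
    assume "int l dvd a"
    then have "int l dvd a^4 * wm_c4 M'"
      using dvd_trans[OF _ dvd_power[of 4 a]] by (simp add: dvd_mult2)
    then have "int l dvd b^4 * wm_c4 M" by (simp only: c4_eq)
    moreover have "\<not> int l dvd b"
      using \<open>int l dvd a\<close> quotient_of_coprime[OF ab] l_prime coprime_common_divisor not_prime_unit
      by blast
    ultimately show False
      using c4 l_prime prime_dvd_mult_iff prime_dvd_power by blast
  qed
  then have "multiplicity (int l) (wm_disc M') = multiplicity (int l) (a^12 * wm_disc M')"
    using l_prime prime_dvd_power
    by (metis multiplicity_prime_elem_times_other prime_imp_prime_elem)
  also have "\<dots> = multiplicity (int l) (b^12 * wm_disc M)" using disc_eq by simp
  also have "\<dots> \<ge> multiplicity (int l) (wm_disc M)"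
    using disc quotient_of_denom_pos[OF ab] by (intro dvd_imp_multiplicity_le) auto
  finally show "multiplicity (int l) (wm_disc M) \<le> multiplicity (int l) (wm_disc M')" .
qed

lemma bad_reduction_imp_dvd_disc:
  assumes l: "prime l" and disc: "wm_disc M \<noteq> 0" and bad: "bad_reduction l (wm_map of_int M)"
  shows "int l dvd wm_disc M"
proof (rule ccontr)
  assume not_dvd: "\<not> int l dvd wm_disc M"
  obtain M0 where min: "minimal_model_at l (wm_map of_int M) M0"
    and dvd0: "int l dvd wm_disc M0"
    using bad unfolding bad_reduction_def by blast
  have "multiplicity (int l) (wm_disc M0) \<le> multiplicity (int l) (wm_disc M)"
    using min wm_iso_refl unfolding minimal_model_at_def by blast
  also have "\<dots> = 0" using not_dvd by (rule not_dvd_imp_multiplicity_0)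
  finally have "multiplicity (int l) (wm_disc M0) = 0" by simp
  moreover have "wm_disc M0 \<noteq> 0"
  proof -
    have "wm_iso (wm_map of_int M) (wm_map of_int M0)"
      using min unfolding minimal_model_at_def by blast
    then obtain u :: rat where "of_int (wm_disc M) = u^12 * of_int (wm_disc M0)"
      by (metis wm_iso_disc_c4 wm_disc_map_of_int)
    then show ?thesis using disc by auto
  qed
  ultimately show False
    using dvd0 l multiplicity_gt_zero_iff[of "wm_disc M0" "int l"] not_prime_unit[of "int l"]
      prime_gt_1_nat[OF l] by simp
qed

section \<open>Squares modulo a prime\<close>

lemma ex_root_quadratic_cong_iff:
  fixes c p :: int
  assumes "coprime 2 p"
  shows "(\<exists>T. [T^2 + T - c = 0] (mod p)) \<longleftrightarrow> (\<exists>s. [s^2 = 4*c + 1] (mod p))"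
proof -
  have "coprime p 4"
    using assms by (metis coprime_commute coprime_mult_left_iff mult_2_right numeral_Bit0)
  then have "[T^2 + T - c = 0] (mod p) \<longleftrightarrow> p dvd 4 * (T^2 + T - c)" for T
    by (simp only: cong_0_iff coprime_dvd_mult_right_iff)
  moreover have "(2*T + 1)^2 - (4*c + 1) = 4 * (T^2 + T - c)" for T
    by (simp add: algebra_simps power2_eq_square)
  ultimately have root_iff: "[T^2 + T - c = 0] (mod p) \<longleftrightarrow> [(2*T + 1)^2 = 4*c + 1] (mod p)" for T
    by (simp only: cong_iff_dvd_diff)
  show ?thesis
  proof
    assume "\<exists>s. [s^2 = 4*c + 1] (mod p)"
    then obtain s where s: "[s^2 = 4*c + 1] (mod p)" by blast
    obtain i where i: "[2*i = 1] (mod p)" using cong_solve_coprime_int[OF assms] by blast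
    have "[2*(i*(s - 1)) + 1 = 1*(s - 1) + 1] (mod p)"
      unfolding mult.assoc[symmetric] by (intro cong_add cong_mult cong_refl i)
    then have "[(2*(i*(s - 1)) + 1)^2 = s^2] (mod p)"
      using cong_pow by fastforce
    then have "[(2*(i*(s - 1)) + 1)^2 = 4*c + 1] (mod p)"
      using s by (rule cong_trans)
    then show "\<exists>T. [T^2 + T - c = 0] (mod p)" using root_iff by blast
  qed (use root_iff in blast)
qed

lemma ex_square_cong_mult_square_iff:
  fixes d v p :: int
  assumes "coprime v p"
  shows "(\<exists>s. [s^2 = d * v^2] (mod p)) \<longleftrightarrow> (\<exists>s. [s^2 = d] (mod p))"
proof
  assume "\<exists>s. [s^2 = d * v^2] (mod p)"
  then obtain s where s: "[s^2 = d * v^2] (mod p)" by blast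
  obtain w where w: "[v*w = 1] (mod p)" using cong_solve_coprime_int[OF assms] by blast
  have "[(s*w)^2 = d * v^2 * w^2] (mod p)"
    unfolding power_mult_distrib by (intro cong_mult cong_refl s)
  also have "d * v^2 * w^2 = d * (v*w)^2" by (simp add: power_mult_distrib)
  also have "[d * (v*w)^2 = d * 1^2] (mod p)" by (intro cong_mult cong_pow cong_refl w)
  finally show "\<exists>s. [s^2 = d] (mod p)" by auto
next
  assume "\<exists>s. [s^2 = d] (mod p)"
  then obtain s where "[s^2 = d] (mod p)" by blast
  then have "[(s*v)^2 = d * v^2] (mod p)"
    unfolding power_mult_distrib by (intro cong_mult cong_refl)
  then show "\<exists>s. [s^2 = d * v^2] (mod p)" by blast
qed

lemma cube_root_of_unity_cong_iff:
  assumes p: "prime p" and "p \<noteq> 3"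
  shows "(\<exists>w. [w^2 + w + 1 = 0] (mod int p)) \<longleftrightarrow> [p = 1] (mod 3)"
proof -
  have cube: "w^3 - 1 = (w - 1) * (w^2 + w + 1)" for w :: int
    by (simp add: algebra_simps power2_eq_square power3_eq_cube)
  show ?thesis
  proof
    assume "\<exists>w. [w^2 + w + 1 = 0] (mod int p)"
    then obtain w where w: "int p dvd w^2 + w + 1" by (auto simp: cong_0_iff)
    define x where "x = nat (w mod int p)"
    have x_w: "[int x = w] (mod int p)"
      using p by (simp add: x_def cong_def prime_gt_0_nat)
    have "[w^3 = 1] (mod int p)"
      using w cube[of w] by (simp add: cong_iff_dvd_diff)
    then have "[int (x^3) = int 1] (mod int p)"
      using cong_trans[OF cong_pow[OF x_w]] by simp
    then have x3: "[x^3 = 1] (mod p)" by (simp only: cong_int_iff)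
    have "\<not> [x = 1] (mod p)"
    proof
      assume "[x = 1] (mod p)"
      then have "[int x = int 1] (mod int p)" by (simp only: cong_int_iff)
      with x_w have "[w = 1] (mod int p)" by (metis cong_sym cong_trans of_nat_1)
      then have "[w^2 + w + 1 = 1^2 + 1 + 1] (mod int p)" by (intro cong_add cong_pow cong_refl)
      with w have "int p dvd 3" by (simp add: cong_dvd_iff)
      then have "p dvd 3" by (metis int_dvd_int_iff of_nat_numeral)
      then have "p = 3" using primes_dvd_imp_eq[OF p, of 3] by simp
      with \<open>p \<noteq> 3\<close> show False ..
    qed
    then have "ord p x \<noteq> 1" using ord_eq_Suc_0_iff by simp
    moreover have "ord p x dvd 3" using x3 ord_divides' by simp
    ultimately have "ord p x = 3" using prime_nat_iff[of 3] by auto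
    moreover have "\<not> p dvd x"
    proof
      assume "p dvd x"
      then have "[x^3 = 0] (mod p)"
        using dvd_trans[OF _ dvd_power[of 3 x]] by (simp add: cong_0_iff)
      with x3 have "p dvd 1" by (metis cong_0_iff cong_sym cong_trans)
      with p show False by simp
    qed
    then have "ord p x dvd p - 1" using fermat_theorem[OF p] ord_divides' by simp
    ultimately show "[p = 1] (mod 3)"
      using prime_ge_1_nat[OF p] by (simp add: cong_altdef_nat)
  next
    assume p1: "[p = 1] (mod 3)"
    obtain g where "residue_primroot p g"
      using prime_primitive_root_exists[OF prime_gt_1_nat[OF p] p] by blast
    then have ord_g: "ord p g = p - 1" using p by (simp add: residue_primroot_def totient_prime)
    obtain q where q: "p - 1 = 3 * q" using p1 prime_ge_1_nat[OF p] by (auto simp: cong_altdef_nat)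
    have "q > 0" using q prime_gt_1_nat[OF p] by simp
    have "[(g^q)^3 = 1] (mod p)" using ord_g q ord_divides' by (simp add: power_mult[symmetric])
    then have w3: "int p dvd int (g^q)^3 - 1"
      by (metis cong_iff_dvd_diff cong_int_iff of_nat_1 of_nat_power)
    have "\<not> [g^q = 1] (mod p)"
      using ord_g q \<open>q > 0\<close> ord_divides'[of g q p] by (auto dest: dvd_imp_le)
    then have "\<not> int p dvd int (g^q) - 1"
      by (metis cong_iff_dvd_diff cong_int_iff of_nat_1)
    with w3 cube[of "int (g^q)"] have "int p dvd int (g^q)^2 + int (g^q) + 1"
      using p by (simp add: prime_dvd_mult_iff)
    then show "\<exists>w. [w^2 + w + 1 = 0] (mod int p)" by (auto simp: cong_0_iff)
  qed
qed

lemma minus_3_square_cong_iff: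
  assumes "prime p" "p \<noteq> 2" "p \<noteq> 3"
  shows "(\<exists>s. [s^2 = -3] (mod int p)) \<longleftrightarrow> [p = 1] (mod 3)"
proof -
  have "coprime 2 (int p)"
    using assms prime_odd_nat[of p] prime_ge_2_nat[of p] by simp
  then show ?thesis
    using ex_root_quadratic_cong_iff[of "int p" "-1"] cube_root_of_unity_cong_iff[OF assms(1,3)]
    by simp
qed

section \<open>Nodes of y^2 + xy = x^3 + hx + j\<close>

lemma node_at_2:
  assumes "even (wm_disc (1, 0, 0, h, j))"
  shows "singular_point_mod 2 (1, 0, 0, h, j) 0 h" and "rational_tangents_mod 2 (1, 0, 0, h, j) 0"
proof -
  have "wm_disc (1, 0, 0, h, j) = h^2 - j + 2 * (36*h*j - 32*h^3 - 216*j^2)"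
    by (simp add: wm_disc_def algebra_simps eval_nat_numeral)
  with assms have "even (h^2 - j)" by simp
  then show "singular_point_mod 2 (1, 0, 0, h, j) 0 h" by (simp add: cong_0_iff)
  show "rational_tangents_mod 2 (1, 0, 0, h, j) 0" by (auto intro: exI[of _ 0])
qed

lemma node_at_origin:
  assumes "int l dvd h" and "int l dvd j"
  shows "singular_point_mod l (1, 0, 0, h, j) 0 0" and "rational_tangents_mod l (1, 0, 0, h, j) 0"
  using assms by (auto simp: cong_0_iff intro: exI[of _ 0])

text \<open>
  fam_h k and fam_j k are the coefficients H(m,n) and J(m,n) written in terms of
  k = \<epsilon>(m + 24n); the divisions are exact.
\<close>

definition fam_f :: "int \<Rightarrow> int" where
  "fam_f k = 108*k^2 - 18*k + 1"

definition fam_h :: "int \<Rightarrow> int" where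
  "fam_h k = (1 - (18*k - 1) * (9*(18*k - 1)^3 + 8)) div 48"

definition fam_j :: "int \<Rightarrow> int" where
  "fam_j k = (- (54*(18*k - 1)^6 + 27*(18*k - 1)^4 + 72*(18*k - 1)^3 + 24*(18*k - 1) + 15)) div 1728"

definition fam_model :: "int \<Rightarrow> int wm" where
  "fam_model k = (1, 0, 0, fam_h k, fam_j k)"

lemma fam_h_eq:
  "fam_h k = 4374*k^3 - 19683*k^4 - 354*k - 729*(k*(k - 1) div 2)"
  "48 * fam_h k = 1 - (18*k - 1) * (9*(18*k - 1)^3 + 8)"
proof -
  have "even (k*(k - 1))" by simp
  then obtain t where t: "k*(k - 1) = 2*t" by (rule evenE)
  have "1 - (18*k - 1) * (9*(18*k - 1)^3 + 8) = 48*(4374*k^3 - 19683*k^4 - 354*k) - 17496*(k*(k - 1))"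
    by (simp add: algebra_simps eval_nat_numeral)
  also have "\<dots> = 48*(4374*k^3 - 19683*k^4 - 354*k - 729*t)" unfolding t by simp
  finally have *: "1 - (18*k - 1) * (9*(18*k - 1)^3 + 8) = 48*(4374*k^3 - 19683*k^4 - 354*k - 729*t)" .
  then show "fam_h k = 4374*k^3 - 19683*k^4 - 354*k - 729*(k*(k - 1) div 2)"
    unfolding fam_h_def t by simp
  with * show "48 * fam_h k = 1 - (18*k - 1) * (9*(18*k - 1)^3 + 8)"
    unfolding t by simp
qed

lemma fam_j_eq:
  "fam_j k = 354294*k^5 - 1062882*k^6 - 47221*k
     - 203391*(k*(k - 1) div 2)^2 - 195858*(k*(k - 1) div 2)*k - 94446*(k*(k - 1) div 2)"
  "1728 * fam_j k =
     - (54*(18*k - 1)^6 + 27*(18*k - 1)^4 + 72*(18*k - 1)^3 + 24*(18*k - 1) + 15)"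
proof -
  have "even (k*(k - 1))" by simp
  then obtain t where t: "k*(k - 1) = 2*t" by (rule evenE)
  have "- (54*(18*k - 1)^6 + 27*(18*k - 1)^4 + 72*(18*k - 1)^3 + 24*(18*k - 1) + 15)
      = 1728*(354294*k^5 - 1062882*k^6 - 47221*k) - 87864912*(k*(k - 1))^2
        - 169221312*(k*(k - 1))*k - 81601344*(k*(k - 1))"
    by (simp add: algebra_simps eval_nat_numeral)
  also have "\<dots> = 1728*(354294*k^5 - 1062882*k^6 - 47221*k - 203391*t^2 - 195858*t*k - 94446*t)"
    unfolding t by (simp add: algebra_simps power2_eq_square)
  finally have *: "- (54*(18*k - 1)^6 + 27*(18*k - 1)^4 + 72*(18*k - 1)^3 + 24*(18*k - 1) + 15)
      = 1728*(354294*k^5 - 1062882*k^6 - 47221*k - 203391*t^2 - 195858*t*k - 94446*t)" .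
  then show "fam_j k = 354294*k^5 - 1062882*k^6 - 47221*k
     - 203391*(k*(k - 1) div 2)^2 - 195858*(k*(k - 1) div 2)*k - 94446*(k*(k - 1) div 2)"
    unfolding fam_j_def t by simp
  with * show "1728 * fam_j k =
     - (54*(18*k - 1)^6 + 27*(18*k - 1)^4 + 72*(18*k - 1)^3 + 24*(18*k - 1) + 15)"
    unfolding t by simp
qed

lemma fam_model_disc: "wm_disc (fam_model k) = - 2 * k * fam_f k"
proof -
  define a where "a = 18*k - 1"
  let ?h = "fam_h k" and ?j = "fam_j k"
  have "1728^2 * wm_disc (fam_model k) = 1296*(48*?h)^2 - 1728*(1728*?j) - 1728*(48*?h)^3
      - 432*(1728*?j)^2 + 2592*(48*?h)*(1728*?j)"
    by (simp add: fam_model_def wm_disc_def eval_nat_numeral algebra_simps)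
  also have "\<dots> = -110592 * (a^3 + 1)"
    unfolding fam_h_eq(2) fam_j_eq(2) a_def[symmetric] by (simp add: eval_nat_numeral algebra_simps)
  also have "\<dots> = 1728^2 * (- 2 * k * fam_f k)"
    by (simp add: a_def fam_f_def eval_nat_numeral algebra_simps)
  finally show ?thesis by simp
qed

lemma fam_model_c4: "wm_c4 (fam_model k) = (18*k - 1) * (9*(18*k - 1)^3 + 8)"
  using fam_h_eq(2)[of k] by (simp add: fam_model_def wm_c4_def)

lemma prime_dvd_fam_f_not_dvd_6k:
  assumes "prime p" and "p dvd fam_f k"
  shows "\<not> p dvd 6*k"
proof
  assume "p dvd 6*k"
  then have "p dvd 6*k * (18*k - 3)" by simp
  with assms(2) have "p dvd fam_f k - 6*k * (18*k - 3)" by (rule dvd_diff)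
  also have "fam_f k - 6*k * (18*k - 3) = 1" by (simp add: fam_f_def algebra_simps power2_eq_square)
  finally show False using assms(1) not_prime_unit by blast
qed

lemma fam_model_not_dvd_c4:
  fixes p :: int
  assumes p: "prime p" and "p dvd wm_disc (fam_model k)"
  shows "\<not> p dvd wm_c4 (fam_model k)"
proof
  assume c4: "p dvd wm_c4 (fam_model k)"
  have "p dvd (-2) * k * fam_f k" using assms(2) by (simp add: fam_model_disc)
  then consider "p dvd 2" | "p dvd k" | "p dvd fam_f k"
    using p by (auto simp: prime_dvd_mult_iff)
  then show False
  proof cases
    case 1
    have "odd (wm_c4 (fam_model k))" by (simp add: fam_model_c4)
    then obtain x where "wm_c4 (fam_model k) = 2*x + 1" by (rule oddE)
    with 1 c4 have "p dvd 1" by (metis add_diff_cancel_left' dvd_diff dvd_mult2)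
    then show False using p not_prime_unit by blast
  next
    case 2
    then have "[k = 0] (mod p)" by (simp add: cong_0_iff)
    then have "[18*k - 1 = 18*0 - 1] (mod p)" by (intro cong_diff cong_mult cong_refl)
    then have "[wm_c4 (fam_model k) = (18*0 - 1) * (9*(18*0 - 1)^3 + 8)] (mod p)"
      unfolding fam_model_c4 by (intro cong_mult cong_add cong_pow cong_refl)
    with c4 have "p dvd 1" by (simp add: cong_dvd_iff)
    then show False using p not_prime_unit by blast
  next
    case 3
    have "wm_c4 (fam_model k) = fam_f k * (8748*k^2 - 486*k + 1) - 3*(6*k)^2"
      by (simp add: fam_model_c4 fam_f_def eval_nat_numeral algebra_simps)
    with c4 3 have "p dvd 3*(6*k)^2" by (metis dvd_diff_right_iff dvd_mult2)
    then consider "p dvd 3" | "p dvd (6*k)^2" using p prime_dvd_mult_iff by blast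
    then have "p dvd 6*k"
      by cases (use p prime_dvd_power[of p "6*k" 2] in \<open>auto intro: dvd_trans[of p 3 "6*k"]\<close>)
    with 3 show False using prime_dvd_fam_f_not_dvd_6k p by blast
  qed
qed

lemma fam_h_j_dvd:
  assumes l: "prime l" "l \<noteq> 2" and lk: "int l dvd k"
  shows "int l dvd fam_h k" and "int l dvd fam_j k"
proof -
  have "even (k*(k - 1))" by simp
  then have "int l dvd (k*(k - 1) div 2) * 2" using lk by simp
  moreover have "coprime (int l) 2" using l prime_odd_nat[of l] prime_ge_2_nat[of l] by simp
  ultimately have s: "int l dvd k*(k - 1) div 2" using coprime_dvd_mult_left_iff by blast
  have "int l dvd x^i" if "int l dvd x" "i > 0" for x i
    using dvd_trans[OF that(1) dvd_power[of i x]] that(2) by simp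
  with lk s show "int l dvd fam_h k" "int l dvd fam_j k"
    unfolding fam_h_eq(1) fam_j_eq(1) by (simp_all add: dvd_diff)
qed

lemma E_mn_eq_fam_model:
  assumes "\<epsilon> \<in> {1, -1}"
  shows "E_mn \<epsilon> m n = wm_map of_int (fam_model (\<epsilon> * (m + 24*n)))"
proof -
  define k where "k = \<epsilon> * (m + 24*n)"
  define a where "a = of_int \<epsilon> * A_mn \<epsilon> m n"
  have a_k: "a = of_int (18*k - 1)"
    using assms by (auto simp: a_def A_mn_def k_def algebra_simps)
  have "48 * H_mn \<epsilon> m n = 1 - a * (9*a^3 + 8)"
    using assms unfolding H_mn_def Let_def B_e_def D_c_def r_mn_def a_def
    by (elim insertE) (simp_all add: field_simps eval_nat_numeral)
  also have "\<dots> = of_int (48 * fam_h k)" unfolding a_k fam_h_eq(2) by simp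
  finally have H: "H_mn \<epsilon> m n = of_int (fam_h k)" by simp
  have "1728 * J_mn \<epsilon> m n = - (54*a^6 + 27*a^4 + 72*a^3 + 24*a + 15)"
    using assms unfolding J_mn_def Let_def B_e_def D_c_def r_mn_def a_def
    by (elim insertE) (simp_all add: field_simps eval_nat_numeral)
  also have "\<dots> = of_int (1728 * fam_j k)" unfolding a_k fam_j_eq(2) by simp
  finally have J: "J_mn \<epsilon> m n = of_int (fam_j k)" by simp
  show ?thesis by (simp add: E_mn_def fam_model_def k_def[symmetric] H J)
qed

lemma coprime_6_power_if_dvd_fam_f:
  assumes "prime l" and "int l dvd fam_f k"
  shows "coprime (2^a * 3^b) (int l)"
proof -
  have "\<not> int l dvd 6*k" using prime_dvd_fam_f_not_dvd_6k assms by simp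
  then have "\<not> int l dvd 2" "\<not> int l dvd 3" by (auto dest: dvd_trans[of _ _ "6*k"])
  moreover have "prime (int l)" using assms(1) by simp
  ultimately have "coprime (int l) 2" "coprime (int l) 3" using prime_imp_coprime by blast+
  then show ?thesis by (metis coprime_commute coprime_mult_left_iff coprime_power_left_iff)
qed

lemma fam_model_singular_point_dvd_f:
  assumes l: "prime l" and lf: "int l dvd fam_f k"
    and X: "[4*x0 = 6*k - 1] (mod int l)" and XY: "[2*y0 + x0 = 0] (mod int l)"
  shows "singular_point_mod l (fam_model k) x0 y0"
proof -
  define v where "v = 6*k - 1"
  have f_v: "fam_f k = 3*v^2 + 3*v + 1"
    by (simp add: v_def fam_f_def algebra_simps power2_eq_square)
  have a_v: "18*k - 1 = 3*v + 2" by (simp add: v_def)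
  have X: "[4*x0 = v] (mod int l)" using X by (simp add: v_def)
  have Y: "[8*y0 = -v] (mod int l)"
  proof -
    have "[4*(2*y0 + x0) - 4*x0 = 4*0 - v] (mod int l)" by (intro cong_diff cong_mult cong_refl X XY)
    then show ?thesis by simp
  qed
  have cancel: "int l dvd z" if "[2^a * 3^b * z = 0] (mod int l)" for a b z
    using that coprime_6_power_if_dvd_fam_f[OF l lf, of a b]
    by (simp add: cong_0_iff coprime_commute coprime_dvd_mult_right_iff)
  \<comment> \<open>in the coordinates (4x, 8y) the conditions become polynomials in v divisible by f\<close>
  have sing1: "[2^6 * 3^3 * (y0^2 + x0*y0 - x0^3 - fam_h k * x0 - fam_j k) = 0] (mod int l)"
  proof -
    have "2^6 * 3^3 * (y0^2 + x0*y0 - x0^3 - fam_h k * x0 - fam_j k)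
        = 27*(8*y0)^2 + 54*(4*x0)*(8*y0) - 27*(4*x0)^3 - 9*(48*fam_h k)*(4*x0) - 1728*fam_j k"
      by (simp add: algebra_simps eval_nat_numeral)
    also have "[\<dots> = 27*(-v)^2 + 54*v*(-v) - 27*v^3 - 9*(48*fam_h k)*v - 1728*fam_j k] (mod int l)"
      by (intro cong_add cong_diff cong_mult cong_pow cong_refl X Y)
    also have "27*(-v)^2 + 54*v*(-v) - 27*v^3 - 9*(48*fam_h k)*v - 1728*fam_j k
        = fam_f k * (13122*v^4 + 41553*v^3 + 48114*v^2 + 24210*v + 4527)"
      unfolding fam_h_eq(2) fam_j_eq(2) a_v f_v by (simp add: algebra_simps eval_nat_numeral)
    also have "[\<dots> = 0] (mod int l)" using lf by (simp add: cong_0_iff)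
    finally show ?thesis .
  qed
  have sing2: "[2^4 * 3^1 * (y0 - 3*x0^2 - fam_h k) = 0] (mod int l)"
  proof -
    have "2^4 * 3^1 * (y0 - 3*x0^2 - fam_h k) = 6*(8*y0) - 9*(4*x0)^2 - 48*fam_h k"
      by (simp add: algebra_simps eval_nat_numeral)
    also have "[\<dots> = 6*(-v) - 9*v^2 - 48*fam_h k] (mod int l)"
      by (intro cong_add cong_diff cong_mult cong_pow cong_refl X Y)
    also have "6*(-v) - 9*v^2 - 48*fam_h k = fam_f k * (243*v^2 + 405*v + 159)"
      unfolding fam_h_eq(2) a_v f_v by (simp add: algebra_simps eval_nat_numeral)
    also have "[\<dots> = 0] (mod int l)" using lf by (simp add: cong_0_iff)
    finally show ?thesis .
  qed
  show ?thesis
    using cancel[OF sing1] cancel[OF sing2] XY by (simp add: fam_model_def cong_0_iff)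
qed

lemma fam_model_rational_tangents_dvd_f:
  assumes l: "prime l" and lf: "int l dvd fam_f k" and X: "[4*x0 = 6*k - 1] (mod int l)"
  shows "rational_tangents_mod l (fam_model k) x0 \<longleftrightarrow> (\<exists>s. [s^2 = -3] (mod int l))"
proof -
  define v where "v = 6*k - 1"
  have f_v: "fam_f k = 3*v^2 + 3*v + 1"
    by (simp add: v_def fam_f_def algebra_simps power2_eq_square)
  have "[3*(4*x0) + 1 = 3*v + 1] (mod int l)"
    using X by (intro cong_add cong_mult cong_refl) (simp add: v_def)
  also have "3*v + 1 = fam_f k - 3*v^2" by (simp add: f_v)
  also have "[fam_f k - 3*v^2 = -3 * v^2] (mod int l)" using lf by (simp add: cong_iff_dvd_diff)
  finally have tangent_disc: "[4*(3*x0) + 1 = -3 * v^2] (mod int l)" by (simp add: ac_simps)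
  have "\<not> int l dvd v"
  proof
    assume "int l dvd v"
    then have "int l dvd fam_f k - v * (3*v + 3)" using lf by (simp add: dvd_diff)
    also have "fam_f k - v * (3*v + 3) = 1" by (simp add: f_v algebra_simps power2_eq_square)
    finally show False using l by simp
  qed
  moreover have "prime (int l)" using l by simp
  ultimately have "coprime v (int l)" using prime_imp_coprime coprime_commute by blast
  have "rational_tangents_mod l (fam_model k) x0 \<longleftrightarrow> (\<exists>T. [T^2 + T - 3*x0 = 0] (mod int l))"
    by (simp add: fam_model_def)
  also have "\<dots> \<longleftrightarrow> (\<exists>s. [s^2 = 4*(3*x0) + 1] (mod int l))"
    using coprime_6_power_if_dvd_fam_f[OF l lf, of 1 0] by (intro ex_root_quadratic_cong_iff) simp
  also have "\<dots> \<longleftrightarrow> (\<exists>s. [s^2 = -3 * v^2] (mod int l))"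
    using tangent_disc by (meson cong_sym cong_trans)
  also have "\<dots> \<longleftrightarrow> (\<exists>s. [s^2 = -3] (mod int l))"
    using \<open>coprime v (int l)\<close> by (rule ex_square_cong_mult_square_iff)
  finally show ?thesis .
qed

lemma fam_model_node_dvd_f:
  assumes l: "prime l" and lf: "int l dvd fam_f k"
  obtains x0 y0 where "singular_point_mod l (fam_model k) x0 y0"
    and "rational_tangents_mod l (fam_model k) x0 \<longleftrightarrow> (\<exists>s. [s^2 = -3] (mod int l))"
proof -
  have "coprime 2 (int l)" using coprime_6_power_if_dvd_fam_f[OF l lf, of 1 0] by simp
  then obtain i where i: "[2*i = 1] (mod int l)" using cong_solve_coprime_int by blast
  define x0 where "x0 = i^2 * (6*k - 1)"
  have "[(2*i)^2 * (6*k - 1) = 1^2 * (6*k - 1)] (mod int l)" by (intro cong_mult cong_pow cong_refl i)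
  then have X: "[4*x0 = 6*k - 1] (mod int l)" by (simp add: x0_def power_mult_distrib mult.assoc)
  have "[x0 - (2*i) * x0 = x0 - 1 * x0] (mod int l)" by (intro cong_diff cong_mult cong_refl i)
  then have XY: "[2*(- (i * x0)) + x0 = 0] (mod int l)" by (simp add: algebra_simps)
  show thesis
    using that fam_model_singular_point_dvd_f[OF l lf X XY] fam_model_rational_tangents_dvd_f[OF l lf X]
    by blast
qed

theorem fam_model_reduction:
  fixes k :: int and l :: nat
  defines "E \<equiv> wm_map of_int (fam_model k)"
  assumes l: "prime l" and "k \<noteq> 0" and bad: "bad_reduction l E"
  shows "multiplicative_reduction l E \<and>
         (l = 2 \<longrightarrow> split_multiplicative_reduction l E) \<and>
         (int l dvd k \<longrightarrow> split_multiplicative_reduction l E) \<and>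
         (int l dvd fam_f k \<longrightarrow>
            ([l = 1] (mod 3) \<longrightarrow> split_multiplicative_reduction l E) \<and>
            ([l = 2] (mod 3) \<longrightarrow> nonsplit_multiplicative_reduction l E))"
proof -
  let ?M = "fam_model k"
  have "odd (fam_f k)" by (simp add: fam_f_def)
  then have disc: "wm_disc ?M \<noteq> 0" using \<open>k \<noteq> 0\<close> by (auto simp: fam_model_disc)
  have l_disc: "int l dvd wm_disc ?M"
    using bad_reduction_imp_dvd_disc[OF l disc] bad by (simp add: E_def)
  have l_c4: "\<not> int l dvd wm_c4 ?M"
    using fam_model_not_dvd_c4 l_disc l by simp
  have min: "minimal_model_at l E ?M"
    unfolding E_def using minimal_model_at_if_not_dvd_c4[OF l disc l_c4] .
  have split: "split_multiplicative_reduction l E"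
    if "singular_point_mod l ?M x0 y0" "rational_tangents_mod l ?M x0" for x0 y0
    unfolding split_multiplicative_reduction_def using min l_disc l_c4 that by blast
  have nonsplit: "nonsplit_multiplicative_reduction l E"
    if "singular_point_mod l ?M x0 y0" "\<not> rational_tangents_mod l ?M x0" for x0 y0
    unfolding nonsplit_multiplicative_reduction_def using min l_disc l_c4 that by blast
  have at_2: "split_multiplicative_reduction l E" if "l = 2"
    using node_at_2[of "fam_h k" "fam_j k"] that
    by (intro split) (simp_all add: fam_model_def[symmetric] fam_model_disc)
  have at_k: "split_multiplicative_reduction l E" if "int l dvd k"
  proof (cases "l = 2")
    case False
    then show ?thesis
      using split[of 0 0] node_at_origin[OF fam_h_j_dvd[OF l False that]] by (simp add: fam_model_def)
  qed (rule at_2)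
  have at_f: "([l = 1] (mod 3) \<longrightarrow> split_multiplicative_reduction l E) \<and>
      ([l = 2] (mod 3) \<longrightarrow> nonsplit_multiplicative_reduction l E)" if lf: "int l dvd fam_f k"
  proof -
    obtain x0 y0 where sing: "singular_point_mod l ?M x0 y0"
      and tangents: "rational_tangents_mod l ?M x0 \<longleftrightarrow> (\<exists>s. [s^2 = -3] (mod int l))"
      using fam_model_node_dvd_f[OF l lf] .
    have "\<not> int l dvd 6*k" using prime_dvd_fam_f_not_dvd_6k l lf by simp
    then have "l \<noteq> 2" "l \<noteq> 3" by auto
    then have "rational_tangents_mod l ?M x0 \<longleftrightarrow> [l = 1] (mod 3)"
      using tangents minus_3_square_cong_iff[OF l] by simp
    then show ?thesis using split[OF sing] nonsplit[OF sing] by (auto simp: cong_def)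
  qed
  show ?thesis
    using min l_disc l_c4 at_2 at_k at_f unfolding multiplicative_reduction_def by blast
qed

theorem proposition3p4:
  fixes \<epsilon> m :: int and n l :: nat
  assumes "\<epsilon> \<in> {1, -1}"
    and "m \<in> {1,2,5,7,8,10,11,13,14,16,17,19,22,23}"
    and "squarefree (delta_m \<epsilon> m (int n))"
    and "prime l"
    and "bad_reduction l (E_mn \<epsilon> m (int n))"
  shows "multiplicative_reduction l (E_mn \<epsilon> m (int n)) \<and>
         (l = 2 \<longrightarrow> split_multiplicative_reduction l (E_mn \<epsilon> m (int n))) \<and>
         (int l dvd m + 24 * int n \<longrightarrow> split_multiplicative_reduction l (E_mn \<epsilon> m (int n))) \<and>
         (int l dvd f_m \<epsilon> m (int n) \<longrightarrow>
            ([l = 1] (mod 3) \<longrightarrow> split_multiplicative_reduction l (E_mn \<epsilon> m (int n))) \<and>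
            ([l = 2] (mod 3) \<longrightarrow> nonsplit_multiplicative_reduction l (E_mn \<epsilon> m (int n))))"
proof -
  define k where "k = \<epsilon> * (m + 24 * int n)"
  have \<epsilon>: "\<epsilon> = 1 \<or> \<epsilon> = -1" using assms(1) by simp
  have "k \<noteq> 0" using \<epsilon> assms(2) by (auto simp: k_def)
  have E: "E_mn \<epsilon> m (int n) = wm_map of_int (fam_model k)"
    unfolding k_def using assms(1) by (rule E_mn_eq_fam_model)
  have f: "f_m \<epsilon> m (int n) = fam_f k"
    using \<epsilon> by (auto simp: k_def f_m_def fam_f_def algebra_simps power2_eq_square)
  have "is_unit \<epsilon>" using \<epsilon> by auto
  then have dvd_k: "int l dvd m + 24 * int n \<longleftrightarrow> int l dvd k"
    unfolding k_def by (rule dvd_mult_unit_iff'[symmetric])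
  show ?thesis
    using fam_model_reduction[OF assms(4) \<open>k \<noteq> 0\<close>] assms(5) unfolding E f dvd_k by simp
qed

end
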